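(* Let $\boldsymbol c\in(0,1)$ and $|y|<\boldsymbol c$. With $z_{ij}$ as defined below, $$|z_{ij}''(y)|\le3\max_{l=1,\dots,d}\frac{\big(m_l^{(2)}(\tfrac1{1-\boldsymbol c})\big)^2}{\big(m_l^{(0)}(1-\boldsymbol c)\big)^4}\qquad\text{for all }i,j.$$
   Context: For each $i$, $Q_{i,n}=\Phi^{-1}(P[X_{i,t}\le n])$ where $X_{i,t}$ is $\mathbb N_0$-valued and $\Phi$ is the standard normal CDF (summands with $Q=\pm\infty$ are $0$). $z_{ij}(y)=\big(\sum_{n_0,n_1\ge0}\exp(-\tfrac12(Q_{i,n_0}^2+Q_{j,n_1}^2-2yQ_{i,n_0}Q_{j,n_1}))\big)^{-1}$ for $y\in(-1,1)$, and $m_i^{(k)}(u)=\frac1{\sqrt{2\pi}}\sum_{n\ge0}e^{-Q_{i,n}^2/(2u)}|Q_{i,n}|^k$, assumed finite for the arguments used, with $m_i^{(0)}(1-\boldsymbol c)>0$. *)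

theory Defs
  imports "HOL-Probability.Probability"
begin

definition Phi :: "real \<Rightarrow> real" where
  "Phi x = (LINT t|lborel. indicator {..x} t * std_normal_density t)"

definition Phi_inv :: "real \<Rightarrow> ereal" where
  "Phi_inv p = (if p \<le> 0 then -\<infinity> else if p \<ge> 1 then \<infinity> else ereal (THE x. Phi x = p))"

text \<open>X i is the (stationary) marginal distribution on N_0 of X_{i,t}.
  Q X i n = Phi^{-1}(P[X_{i,t} \<le> n]).\<close>
definition Q :: "(nat \<Rightarrow> nat pmf) \<Rightarrow> nat \<Rightarrow> nat \<Rightarrow> ereal" where
  "Q X i n = Phi_inv (measure_pmf.prob (X i) {..n})"

definition z_term :: "(nat \<Rightarrow> nat pmf) \<Rightarrow> nat \<Rightarrow> nat \<Rightarrow> real \<Rightarrow> nat \<times> nat \<Rightarrow> real" where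
  "z_term X i j y nn =
     (let a = Q X i (fst nn); b = Q X j (snd nn) in
      if \<bar>a\<bar> = \<infinity> \<or> \<bar>b\<bar> = \<infinity> then 0
      else exp (- (1/2) * ((real_of_ereal a)\<^sup>2 + (real_of_ereal b)\<^sup>2
                           - 2 * y * real_of_ereal a * real_of_ereal b)))"

definition z :: "(nat \<Rightarrow> nat pmf) \<Rightarrow> nat \<Rightarrow> nat \<Rightarrow> real \<Rightarrow> real" where
  "z X i j y = inverse (\<Sum>\<^sub>\<infinity>nn\<in>UNIV. z_term X i j y nn)"

definition m_term :: "(nat \<Rightarrow> nat pmf) \<Rightarrow> nat \<Rightarrow> nat \<Rightarrow> real \<Rightarrow> nat \<Rightarrow> real" where
  "m_term X i k u n =
     (let q = Q X i n in
      if \<bar>q\<bar> = \<infinity> then 0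
      else exp (- (real_of_ereal q)\<^sup>2 / (2 * u)) * \<bar>real_of_ereal q\<bar> ^ k)"

definition m :: "(nat \<Rightarrow> nat pmf) \<Rightarrow> nat \<Rightarrow> nat \<Rightarrow> real \<Rightarrow> real" where
  "m X i k u = 1 / sqrt (2 * pi) * (\<Sum>n. m_term X i k u n)"

end

theory Submission
  imports Defs
begin

(*
  Enumerating the pairs (n0, n1) along prod_decode, 1 / z_ij(y) is an exponential series
  T(y) = sum_k w_k exp (y p_k) with w_k >= 0 and p_k = Q_{i,n0} Q_{j,n1}.  Since
  |y a b| <= c (a^2 + b^2) / 2 for |y| <= c, every summand is squeezed between products of
  one-variable Gaussian terms: from below by those of m^(0)(1 - c) and, after multiplication
  by |p_k|^n, from above by those of m^(n)(1 / (1 - c)).  The upper bounds give a summable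
  majorant for the series and its first two termwise derivatives on (-c, c), so T is twice
  differentiable there, and (1/T)'' = -T''/T^2 + 2 T'^2/T^3 together with the Cauchy-Schwarz
  inequality T'^2 <= T T'' gives |z''| <= T''/T^2.  Bounding T'' from above and T from below
  by products of the one-variable sums yields |z''| <= r_i r_j / (2 pi) with
  r_l = m_l^(2)(1/(1-c)) / m_l^(0)(1-c)^2, and r_i r_j <= max_l r_l^2.
*)

definition tensor_seq :: "(nat \<Rightarrow> real) \<Rightarrow> (nat \<Rightarrow> real) \<Rightarrow> nat \<Rightarrow> real" where
  "tensor_seq f g k = f (fst (prod_decode k)) * g (snd (prod_decode k))"

lemma sums_tensor_seq:
  fixes f g :: "nat \<Rightarrow> real"
  assumes "\<And>n. 0 \<le> f n" "\<And>n. 0 \<le> g n" "f sums F" "g sums G"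
  shows "tensor_seq f g sums (F * G)"
proof -
  have f: "(f has_sum F) UNIV" and g: "(g has_sum G) UNIV"
    using assms by (auto intro: sums_nonneg_imp_has_sum)
  have rows: "((\<lambda>b. f a * g b) has_sum f a * G) UNIV" for a
    by (rule has_sum_cmult_right[OF g])
  have cols: "((\<lambda>a. f a * G) has_sum F * G) UNIV"
    by (rule has_sum_cmult_left[OF f])
  have "(\<lambda>(a, b). f a * g b) summable_on UNIV \<times> UNIV"
    using rows cols assms(1,2)
    by (intro summable_on_SigmaI[where g = "\<lambda>a. f a * G"]) (auto intro: has_sum_imp_summable)
  then have "((\<lambda>(a, b). f a * g b) has_sum F * G) (UNIV \<times> UNIV)"
    using rows cols by (intro has_sum_SigmaI[where g = "\<lambda>a. f a * G"]) auto
  then have "((\<lambda>k. case prod_decode k of (a, b) \<Rightarrow> f a * g b) has_sum F * G) UNIV"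
    by (simp add: has_sum_reindex_bij_betw[OF bij_prod_decode])
  then show ?thesis
    unfolding tensor_seq_def[abs_def] by (auto dest!: has_sum_imp_sums simp: case_prod_beta)
qed

lemma sums_weighted_Cauchy_Schwarz:
  fixes w p :: "nat \<Rightarrow> real"
  assumes "\<And>k. 0 \<le> w k"
    and "w sums A" "(\<lambda>k. w k * p k) sums B" "(\<lambda>k. w k * (p k)\<^sup>2) sums C"
  shows "B\<^sup>2 \<le> A * C"
proof (rule LIMSEQ_le)
  show "(\<lambda>n. (\<Sum>k<n. w k * p k)\<^sup>2) \<longlonglongrightarrow> B\<^sup>2"
    using assms(3) unfolding sums_def by (intro tendsto_intros)
  show "(\<lambda>n. (\<Sum>k<n. w k) * (\<Sum>k<n. w k * (p k)\<^sup>2)) \<longlonglongrightarrow> A * C"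
    using assms(2,4) unfolding sums_def by (intro tendsto_intros)
  have "(\<Sum>k<n. sqrt (w k) * (sqrt (w k) * p k))\<^sup>2
          \<le> (\<Sum>k<n. (sqrt (w k))\<^sup>2) * (\<Sum>k<n. (sqrt (w k) * p k)\<^sup>2)" for n
    by (rule Cauchy_Schwarz_ineq_sum)
  then have "(\<Sum>k<n. w k * p k)\<^sup>2 \<le> (\<Sum>k<n. w k) * (\<Sum>k<n. w k * (p k)\<^sup>2)" for n
    using assms(1) by (simp add: power_mult_distrib mult.assoc[symmetric])
  then show "\<exists>N. \<forall>n\<ge>N. (\<Sum>k<n. w k * p k)\<^sup>2 \<le> (\<Sum>k<n. w k) * (\<Sum>k<n. w k * (p k)\<^sup>2)"
    by blast
qed

lemma exp_series_term_bounded: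
  fixes w p M :: "nat \<Rightarrow> real"
  assumes "\<And>k. 0 \<le> w k"
    and "\<And>k x n. \<bar>x\<bar> < c \<Longrightarrow> n \<le> 2 \<Longrightarrow> w k * \<bar>p k\<bar> ^ n * exp (x * p k) \<le> M k"
    and "\<bar>x\<bar> < c" "n \<le> 2"
  shows "norm (w k * p k ^ n * exp (x * p k)) \<le> M k"
  using assms(2)[OF assms(3,4)] assms(1)[of k] by (simp add: abs_mult power_abs)

lemma summable_exp_series:
  fixes w p M :: "nat \<Rightarrow> real"
  assumes "\<And>k. 0 \<le> w k" "summable M"
    and "\<And>k x n. \<bar>x\<bar> < c \<Longrightarrow> n \<le> 2 \<Longrightarrow> w k * \<bar>p k\<bar> ^ n * exp (x * p k) \<le> M k"
    and "\<bar>x\<bar> < c" "n \<le> 2"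
  shows "summable (\<lambda>k. w k * p k ^ n * exp (x * p k))"
  using exp_series_term_bounded[OF assms(1,3,4,5)] by (rule summable_comparison_test'[OF assms(2)])

lemma has_field_derivative_exp_series:
  fixes w p M :: "nat \<Rightarrow> real"
  assumes "\<And>k. 0 \<le> w k" "summable M"
    and "\<And>k x n. \<bar>x\<bar> < c \<Longrightarrow> n \<le> 2 \<Longrightarrow> w k * \<bar>p k\<bar> ^ n * exp (x * p k) \<le> M k"
    and "\<bar>y\<bar> < c" "n \<le> 1"
  shows "((\<lambda>x. \<Sum>k. w k * p k ^ n * exp (x * p k))
           has_field_derivative (\<Sum>k. w k * p k ^ Suc n * exp (y * p k))) (at y)"
proof -
  have y: "y \<in> {-c<..<c}" using assms(4) by auto
  have deriv: "((\<lambda>x. w k * p k ^ n * exp (x * p k))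
          has_field_derivative w k * p k ^ Suc n * exp (x * p k)) (at x within {-c<..<c})" for k x
    by (auto intro!: derivative_eq_intros)
  have uniform: "uniformly_convergent_on {-c<..<c} (\<lambda>N x. \<Sum>k<N. w k * p k ^ Suc n * exp (x * p k))"
    using assms(5) by (intro Weierstrass_m_test'[OF _ assms(2)] exp_series_term_bounded[OF assms(1,3)]) auto
  have summable_y: "summable (\<lambda>k. w k * p k ^ n * exp (y * p k))"
    using assms(5) by (intro summable_exp_series[OF assms(1-4)]) auto
  show ?thesis
    by (rule has_field_derivative_series'(2)[OF convex_real_interval(8) deriv uniform y summable_y])
      (use y in \<open>simp add: interior_open\<close>)
qed

lemma deriv2_inverse:
  fixes T T' T'' g :: "real \<Rightarrow> real"
  assumes "open S" "y \<in> S" "\<And>x. x \<in> S \<Longrightarrow> 0 < T x"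
    and "\<And>x. x \<in> S \<Longrightarrow> (T has_field_derivative T' x) (at x)"
    and "\<And>x. x \<in> S \<Longrightarrow> (T' has_field_derivative T'' x) (at x)"
    and "\<And>x. x \<in> S \<Longrightarrow> g x = inverse (T x)"
  shows "deriv (deriv g) y = - T'' y / (T y)\<^sup>2 + 2 * (T' y)\<^sup>2 / (T y) ^ 3"
proof -
  have deriv_g: "deriv g x = - T' x / (T x)\<^sup>2" if x: "x \<in> S" for x
  proof -
    have "((\<lambda>x. inverse (T x)) has_field_derivative - (T' x * inverse (T x ^ 2))) (at x)"
      using DERIV_inverse_fun[OF assms(4)[OF x]] assms(3)[OF x] by (simp add: power2_eq_square)
    then have "(g has_field_derivative - (T' x * inverse (T x ^ 2))) (at x)"
      by (rule has_field_derivative_transform_within_open[OF _ assms(1) x]) (use assms(6) in auto)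
    then show ?thesis by (simp add: DERIV_imp_deriv divide_inverse)
  qed
  have "((\<lambda>x. - T' x / (T x)\<^sup>2) has_field_derivative
      - T'' y / (T y)\<^sup>2 + 2 * (T' y)\<^sup>2 / (T y) ^ 3) (at y)"
  proof (rule DERIV_cong[OF DERIV_divide[OF DERIV_minus[OF assms(5)] DERIV_power[OF assms(4)]]])
    show "(- T'' y * (T y)\<^sup>2 - - T' y * (of_nat 2 * (T' y * T y ^ (2 - Suc 0)))) / ((T y)\<^sup>2 * (T y)\<^sup>2)
        = - T'' y / (T y)\<^sup>2 + 2 * (T' y)\<^sup>2 / (T y) ^ 3"
      using assms(3)[OF assms(2)] by (simp add: field_simps power2_eq_square power3_eq_cube)
  qed (use assms(2) assms(3)[OF assms(2)] in simp_all)
  then have "(deriv g has_field_derivative - T'' y / (T y)\<^sup>2 + 2 * (T' y)\<^sup>2 / (T y) ^ 3) (at y)"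
    by (rule has_field_derivative_transform_within_open[OF _ assms(1,2)]) (simp add: deriv_g)
  then show ?thesis by (rule DERIV_imp_deriv)
qed

lemma abs_inverse_second_derivative_le:
  fixes A B C :: real
  assumes "B\<^sup>2 \<le> A * C" "0 \<le> C" "0 < A"
  shows "\<bar>- C / A\<^sup>2 + 2 * B\<^sup>2 / A ^ 3\<bar> \<le> C / A\<^sup>2"
proof -
  have "B\<^sup>2 / A ^ 3 \<le> A * C / A ^ 3"
    using assms(1,3) by (simp add: divide_right_mono)
  also have "\<dots> = C / A\<^sup>2"
    using assms(3) by (simp add: power2_eq_square power3_eq_cube)
  finally have "B\<^sup>2 / A ^ 3 \<le> C / A\<^sup>2" .
  moreover have "0 \<le> B\<^sup>2 / A ^ 3" "0 \<le> C / A\<^sup>2" using assms(2,3) by simp_all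
  ultimately show ?thesis by (simp add: abs_le_iff)
qed

lemma abs_deriv2_inverse_exp_series_le:
  fixes w p M :: "nat \<Rightarrow> real" and g :: "real \<Rightarrow> real"
  assumes "\<And>k. 0 \<le> w k" "summable M"
    and "\<And>k x n. \<bar>x\<bar> < c \<Longrightarrow> n \<le> 2 \<Longrightarrow> w k * \<bar>p k\<bar> ^ n * exp (x * p k) \<le> M k"
    and "\<And>x. \<bar>x\<bar> < c \<Longrightarrow> 0 < (\<Sum>k. w k * exp (x * p k))"
    and "\<And>x. \<bar>x\<bar> < c \<Longrightarrow> g x = inverse (\<Sum>k. w k * exp (x * p k))"
    and "\<bar>y\<bar> < c"
  shows "\<bar>deriv (deriv g) y\<bar>
           \<le> (\<Sum>k. w k * (p k)\<^sup>2 * exp (y * p k)) / (\<Sum>k. w k * exp (y * p k))\<^sup>2"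
proof -
  define T where "T n x = (\<Sum>k. w k * p k ^ n * exp (x * p k))" for n x
  have T0: "T 0 x = (\<Sum>k. w k * exp (x * p k))" for x by (simp add: T_def)
  have sums: "(\<lambda>k. w k * p k ^ n * exp (x * p k)) sums T n x" if "\<bar>x\<bar> < c" "n \<le> 2" for n x
    unfolding T_def using summable_exp_series[OF assms(1-3) that] by (rule summable_sums)
  have deriv: "(T n has_field_derivative T (Suc n) x) (at x)" if "\<bar>x\<bar> < c" "n \<le> 1" for n x
    unfolding T_def[abs_def] using has_field_derivative_exp_series[OF assms(1-3) that] by simp
  have deriv2_g: "deriv (deriv g) y = - T 2 y / (T 0 y)\<^sup>2 + 2 * (T 1 y)\<^sup>2 / (T 0 y) ^ 3"
  proof (rule deriv2_inverse[where S = "{-c<..<c}"])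
    show "\<And>x. x \<in> {-c<..<c} \<Longrightarrow> (T 0 has_field_derivative T 1 x) (at x)"
      using deriv[of _ 0] by auto
    show "\<And>x. x \<in> {-c<..<c} \<Longrightarrow> (T 1 has_field_derivative T 2 x) (at x)"
      using deriv[of _ 1] by (auto simp: numeral_2_eq_2)
    show "x \<in> {-c<..<c} \<Longrightarrow> 0 < T 0 x" for x
      using assms(4)[of x] by (simp add: T0 abs_less_iff)
    show "x \<in> {-c<..<c} \<Longrightarrow> g x = inverse (T 0 x)" for x
      using assms(5)[of x] by (simp add: T0 abs_less_iff)
  qed (use assms(6) in auto)
  have Cauchy_Schwarz: "(T 1 y)\<^sup>2 \<le> T 0 y * T 2 y"
  proof (rule sums_weighted_Cauchy_Schwarz[where w = "\<lambda>k. w k * exp (y * p k)" and p = p])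
    show "(\<lambda>k. w k * exp (y * p k)) sums T 0 y"
      using sums[OF assms(6), of 0] by simp
    show "(\<lambda>k. w k * exp (y * p k) * p k) sums T 1 y"
      using sums[OF assms(6), of 1] by (simp add: mult_ac)
    show "(\<lambda>k. w k * exp (y * p k) * (p k)\<^sup>2) sums T 2 y"
      using sums[OF assms(6), of 2] by (simp add: mult_ac)
  qed (use assms(1) in simp)
  have T2_nonneg: "0 \<le> T 2 y"
    unfolding T_def by (rule suminf_nonneg[OF sums_summable[OF sums[OF assms(6)]]]) (use assms(1) in simp_all)
  have T0_pos: "0 < T 0 y" using assms(4)[OF assms(6)] by (simp add: T0)
  have "\<bar>deriv (deriv g) y\<bar> \<le> T 2 y / (T 0 y)\<^sup>2"
    unfolding deriv2_g by (rule abs_inverse_second_derivative_le[OF Cauchy_Schwarz T2_nonneg T0_pos])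
  then show ?thesis by (simp add: T_def)
qed

lemma abs_mult_le_half_sum_squares:
  fixes x a b c :: real
  assumes "\<bar>x\<bar> \<le> c"
  shows "\<bar>x * a * b\<bar> \<le> c * (a\<^sup>2 + b\<^sup>2) / 2"
proof -
  have "\<bar>x * a * b\<bar> = \<bar>x\<bar> * (\<bar>a\<bar> * \<bar>b\<bar>)" by (simp add: abs_mult)
  also have "\<dots> \<le> c * ((a\<^sup>2 + b\<^sup>2) / 2)"
    using sum_squares_bound[of "\<bar>a\<bar>" "\<bar>b\<bar>"] assms by (intro mult_mono) auto
  finally show ?thesis by simp
qed

lemma bivariate_gauss_le_product:
  fixes x a b c :: real
  assumes "\<bar>x\<bar> \<le> c" "c < 1"
  shows "exp (- (1/2) * (a\<^sup>2 + b\<^sup>2 - 2 * x * a * b))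
           \<le> exp (- a\<^sup>2 / (2 * (1 / (1 - c)))) * exp (- b\<^sup>2 / (2 * (1 / (1 - c))))"
  using abs_mult_le_half_sum_squares[OF assms(1), of a b] assms(2)
  by (simp add: exp_add[symmetric] abs_le_iff field_simps)

lemma bivariate_gauss_ge_product:
  fixes x a b c :: real
  assumes "\<bar>x\<bar> \<le> c" "c < 1"
  shows "exp (- a\<^sup>2 / (2 * (1 - c))) * exp (- b\<^sup>2 / (2 * (1 - c)))
           \<le> exp (- (1/2) * (a\<^sup>2 + b\<^sup>2 - 2 * x * a * b))"
proof -
  define s where "s = a\<^sup>2 + b\<^sup>2"
  define t where "t = 1 / (1 - c) * s"
  have "1 + c \<le> 1 / (1 - c)"
    using assms(2) by (simp add: field_simps)
  then have "(1 + c) * s \<le> t"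
    unfolding t_def by (rule mult_right_mono) (simp add: s_def)
  moreover have "- (c * s / 2) \<le> x * a * b"
    using abs_mult_le_half_sum_squares[OF assms(1), of a b] by (simp add: s_def abs_le_iff)
  ultimately have "- t / 2 \<le> x * a * b - s / 2"
    by (simp add: distrib_right)
  moreover have "- a\<^sup>2 / (2 * (1 - c)) + - b\<^sup>2 / (2 * (1 - c)) = - t / 2"
    by (simp add: s_def t_def divide_simps)
  moreover have "- (1/2) * (a\<^sup>2 + b\<^sup>2 - 2 * x * a * b) = x * a * b - s / 2"
    by (simp add: s_def algebra_simps)
  ultimately show ?thesis by (simp add: exp_add[symmetric])
qed

lemma abs_power_le_one_plus_square:
  fixes a :: real
  assumes "n \<le> 2"
  shows "\<bar>a\<bar> ^ n \<le> 1 + \<bar>a\<bar>\<^sup>2"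
proof -
  consider "n = 0" | "n = 1" | "n = 2" using assms by linarith
  then show ?thesis
    using sum_squares_bound[of "\<bar>a\<bar>" 1] by cases auto
qed

lemma gauss_le_square_gauss_plus:
  fixes a c :: real
  assumes "c < 1"
  shows "exp (- a\<^sup>2 / (2 * (1 / (1 - c))))
           \<le> exp (- a\<^sup>2 / (2 * (1 / (1 - c)))) * \<bar>a\<bar>\<^sup>2 + exp (1 / (2 * (1 - c))) * exp (- a\<^sup>2 / (2 * (1 - c)))"
proof (cases "1 \<le> a\<^sup>2")
  case True
  then show ?thesis by (simp add: mult_le_cancel_left1 add_increasing2)
next
  case False
  have "exp (- a\<^sup>2 / (2 * (1 / (1 - c)))) \<le> 1"
    using assms mult_right_mono[of c 1 "a\<^sup>2"] by (simp add: field_simps)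
  also have "1 \<le> exp (1 / (2 * (1 - c))) * exp (- a\<^sup>2 / (2 * (1 - c)))"
    using assms False by (simp add: exp_add[symmetric] field_simps)
  finally show ?thesis by (simp add: add_increasing)
qed

lemma m_term_nonneg: "0 \<le> m_term X l k u n"
  by (cases "Q X l n") (simp_all add: m_term_def)

lemma z_term_nonneg: "0 \<le> z_term X i j x nn"
  by (simp add: z_term_def Let_def)

lemma z_term_eq_exp_mult:
  "z_term X i j x (n0, n1)
     = z_term X i j 0 (n0, n1) * exp (x * (real_of_ereal (Q X i n0) * real_of_ereal (Q X j n1)))"
  by (simp add: z_term_def Let_def exp_add[symmetric] algebra_simps)

lemma z_term_mult_le_m_term:
  assumes "\<bar>x\<bar> \<le> c" "c < 1"
  shows "z_term X i j x (n0, n1) * \<bar>real_of_ereal (Q X i n0) * real_of_ereal (Q X j n1)\<bar> ^ k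
           \<le> m_term X i k (1 / (1 - c)) n0 * m_term X j k (1 / (1 - c)) n1"
proof (cases "Q X i n0"; cases "Q X j n1")
  fix a b assume "Q X i n0 = ereal a" "Q X j n1 = ereal b"
  moreover have "exp (- (1/2) * (a\<^sup>2 + b\<^sup>2 - 2 * x * a * b)) * (\<bar>a\<bar> ^ k * \<bar>b\<bar> ^ k)
      \<le> exp (- a\<^sup>2 / (2 * (1 / (1 - c)))) * exp (- b\<^sup>2 / (2 * (1 / (1 - c)))) * (\<bar>a\<bar> ^ k * \<bar>b\<bar> ^ k)"
    by (rule mult_right_mono[OF bivariate_gauss_le_product[OF assms]]) simp
  ultimately show ?thesis
    by (simp add: z_term_def m_term_def abs_mult power_mult_distrib mult_ac)
qed (simp_all add: z_term_def m_term_def)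

lemma m_term_mult_le_z_term:
  assumes "\<bar>x\<bar> \<le> c" "c < 1"
  shows "m_term X i 0 (1 - c) n0 * m_term X j 0 (1 - c) n1 \<le> z_term X i j x (n0, n1)"
proof (cases "Q X i n0"; cases "Q X j n1")
  fix a b assume "Q X i n0 = ereal a" "Q X j n1 = ereal b"
  with bivariate_gauss_ge_product[OF assms, of a b] show ?thesis
    by (simp add: z_term_def m_term_def)
qed (simp_all add: z_term_def m_term_def)

lemma m_term_le_m_term_0_plus_2:
  assumes "n \<le> 2"
  shows "m_term X l n u k \<le> m_term X l 0 u k + m_term X l 2 u k"
proof (cases "Q X l k")
  case (real a)
  have "exp (- a\<^sup>2 / (2 * u)) * \<bar>a\<bar> ^ n \<le> exp (- a\<^sup>2 / (2 * u)) * (1 + \<bar>a\<bar>\<^sup>2)"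
    by (rule mult_left_mono[OF abs_power_le_one_plus_square[OF assms]]) simp
  with real show ?thesis by (simp add: m_term_def distrib_left)
qed (simp_all add: m_term_def)

lemma m_term_0_le:
  assumes "c < 1"
  shows "m_term X l 0 (1 / (1 - c)) n
           \<le> m_term X l 2 (1 / (1 - c)) n + exp (1 / (2 * (1 - c))) * m_term X l 0 (1 - c) n"
  using gauss_le_square_gauss_plus[OF assms] by (cases "Q X l n") (simp_all add: m_term_def)

lemma summable_m_term_0:
  assumes "c < 1" "summable (m_term X l 2 (1 / (1 - c)))" "summable (m_term X l 0 (1 - c))"
  shows "summable (m_term X l 0 (1 / (1 - c)))"
proof (rule summable_comparison_test'[OF summable_add[OF assms(2) summable_mult[OF assms(3)]]])
  show "norm (m_term X l 0 (1 / (1 - c)) n)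
          \<le> m_term X l 2 (1 / (1 - c)) n + exp (1 / (2 * (1 - c))) * m_term X l 0 (1 - c) n" for n
    using m_term_0_le[OF assms(1)] m_term_nonneg by simp
qed

definition z_weight :: "(nat \<Rightarrow> nat pmf) \<Rightarrow> nat \<Rightarrow> nat \<Rightarrow> nat \<Rightarrow> real" where
  "z_weight X i j k = z_term X i j 0 (prod_decode k)"

definition z_exponent :: "(nat \<Rightarrow> nat pmf) \<Rightarrow> nat \<Rightarrow> nat \<Rightarrow> nat \<Rightarrow> real" where
  "z_exponent X i j k =
     real_of_ereal (Q X i (fst (prod_decode k))) * real_of_ereal (Q X j (snd (prod_decode k)))"

lemma z_weight_nonneg: "0 \<le> z_weight X i j k"
  by (simp add: z_weight_def z_term_nonneg)

lemma z_term_prod_decode: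
  "z_term X i j x (prod_decode k) = z_weight X i j k * exp (x * z_exponent X i j k)"
  using z_term_eq_exp_mult[of X i j x "fst (prod_decode k)" "snd (prod_decode k)"]
  by (simp add: z_weight_def z_exponent_def)

lemma z_eq_inverse_exp_series:
  assumes "summable (\<lambda>k. z_weight X i j k * exp (x * z_exponent X i j k))"
  shows "z X i j x = inverse (\<Sum>k. z_weight X i j k * exp (x * z_exponent X i j k))"
proof -
  have "((\<lambda>k. z_weight X i j k * exp (x * z_exponent X i j k))
          has_sum (\<Sum>k. z_weight X i j k * exp (x * z_exponent X i j k))) UNIV"
    by (rule sums_nonneg_imp_has_sum[OF summable_sums[OF assms]]) (simp add: z_weight_nonneg)
  then have "(z_term X i j x has_sum (\<Sum>k. z_weight X i j k * exp (x * z_exponent X i j k))) UNIV"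
    by (simp add: z_term_prod_decode[symmetric] has_sum_reindex_bij_betw[OF bij_prod_decode])
  then show ?thesis by (simp add: z_def infsumI)
qed

lemma z_exp_series_term_le:
  assumes "\<bar>x\<bar> \<le> c" "c < 1"
  shows "z_weight X i j k * \<bar>z_exponent X i j k\<bar> ^ n * exp (x * z_exponent X i j k)
           \<le> tensor_seq (m_term X i n (1 / (1 - c))) (m_term X j n (1 / (1 - c))) k"
  using z_term_mult_le_m_term[OF assms, of X i j "fst (prod_decode k)" "snd (prod_decode k)" n]
  by (simp add: tensor_seq_def z_term_prod_decode z_exponent_def mult_ac)

lemma z_exp_series_term_ge:
  assumes "\<bar>x\<bar> \<le> c" "c < 1"
  shows "tensor_seq (m_term X i 0 (1 - c)) (m_term X j 0 (1 - c)) k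
           \<le> z_weight X i j k * exp (x * z_exponent X i j k)"
  using m_term_mult_le_z_term[OF assms, of X i "fst (prod_decode k)" j "snd (prod_decode k)"]
  by (simp add: tensor_seq_def z_term_prod_decode)

lemma z_exp_series_dominated:
  assumes "c < 1"
    and "\<And>l. l \<in> {i, j} \<Longrightarrow> summable (m_term X l 2 (1 / (1 - c)))"
    and "\<And>l. l \<in> {i, j} \<Longrightarrow> summable (m_term X l 0 (1 - c))"
  obtains M where "summable M"
    and "\<And>k x n. \<bar>x\<bar> < c \<Longrightarrow> n \<le> 2 \<Longrightarrow>
           z_weight X i j k * \<bar>z_exponent X i j k\<bar> ^ n * exp (x * z_exponent X i j k) \<le> M k"
proof
  define E where "E l n = m_term X l 0 (1 / (1 - c)) n + m_term X l 2 (1 / (1 - c)) n" for l n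
  have "summable (E l)" if "l \<in> {i, j}" for l
    unfolding E_def[abs_def] using assms that by (intro summable_add summable_m_term_0)
  then have "tensor_seq (E i) (E j) sums (suminf (E i) * suminf (E j))"
    by (intro sums_tensor_seq summable_sums) (auto simp: E_def m_term_nonneg)
  then show "summable (tensor_seq (E i) (E j))"
    by (rule sums_summable)
  fix k n :: nat and x :: real
  assume "\<bar>x\<bar> < c" "n \<le> 2"
  then have "z_weight X i j k * \<bar>z_exponent X i j k\<bar> ^ n * exp (x * z_exponent X i j k)
               \<le> tensor_seq (m_term X i n (1 / (1 - c))) (m_term X j n (1 / (1 - c))) k"
    using assms(1) by (intro z_exp_series_term_le) auto
  also have "\<dots> \<le> tensor_seq (E i) (E j) k"
    unfolding tensor_seq_def E_def using \<open>n \<le> 2\<close>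
    by (intro mult_mono m_term_le_m_term_0_plus_2 m_term_nonneg add_nonneg_nonneg)
  finally show "z_weight X i j k * \<bar>z_exponent X i j k\<bar> ^ n * exp (x * z_exponent X i j k)
                  \<le> tensor_seq (E i) (E j) k" .
qed

lemma suminf_z_exp_series_ge:
  assumes "\<bar>x\<bar> \<le> c" "c < 1"
    and "summable (m_term X i 0 (1 - c))" "summable (m_term X j 0 (1 - c))"
    and "summable (\<lambda>k. z_weight X i j k * exp (x * z_exponent X i j k))"
  shows "(\<Sum>n. m_term X i 0 (1 - c) n) * (\<Sum>n. m_term X j 0 (1 - c) n)
           \<le> (\<Sum>k. z_weight X i j k * exp (x * z_exponent X i j k))"
  by (rule sums_le[OF _ sums_tensor_seq[OF _ _ assms(3,4)[THEN summable_sums]] assms(5)[THEN summable_sums]])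
     (simp_all add: m_term_nonneg z_exp_series_term_ge[OF assms(1,2)])

lemma suminf_z_exp_series_moment2_le:
  assumes "\<bar>x\<bar> \<le> c" "c < 1"
    and "summable (m_term X i 2 (1 / (1 - c)))" "summable (m_term X j 2 (1 / (1 - c)))"
    and "summable (\<lambda>k. z_weight X i j k * (z_exponent X i j k)\<^sup>2 * exp (x * z_exponent X i j k))"
  shows "(\<Sum>k. z_weight X i j k * (z_exponent X i j k)\<^sup>2 * exp (x * z_exponent X i j k))
           \<le> (\<Sum>n. m_term X i 2 (1 / (1 - c)) n) * (\<Sum>n. m_term X j 2 (1 / (1 - c)) n)"
  using z_exp_series_term_le[OF assms(1,2), of X i j _ 2]
  by (intro sums_le[OF _ assms(5)[THEN summable_sums] sums_tensor_seq[OF _ _ assms(3,4)[THEN summable_sums]]])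
     (simp_all add: m_term_nonneg)

lemma abs_deriv2_z_le_suminf:
  fixes X :: "nat \<Rightarrow> nat pmf" and c y :: real
  assumes "c < 1" "\<bar>y\<bar> < c"
    and "\<And>l. l \<in> {i, j} \<Longrightarrow> summable (m_term X l 2 (1 / (1 - c)))"
    and "\<And>l. l \<in> {i, j} \<Longrightarrow> summable (m_term X l 0 (1 - c))"
    and "\<And>l. l \<in> {i, j} \<Longrightarrow> 0 < (\<Sum>n. m_term X l 0 (1 - c) n)"
  shows "\<bar>deriv (deriv (z X i j)) y\<bar>
           \<le> (\<Sum>n. m_term X i 2 (1 / (1 - c)) n) * (\<Sum>n. m_term X j 2 (1 / (1 - c)) n)
             / ((\<Sum>n. m_term X i 0 (1 - c) n) * (\<Sum>n. m_term X j 0 (1 - c) n))\<^sup>2"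
proof -
  define w where "w = z_weight X i j"
  define p where "p = z_exponent X i j"
  define SA where "SA = (\<Sum>n. m_term X i 2 (1 / (1 - c)) n) * (\<Sum>n. m_term X j 2 (1 / (1 - c)) n)"
  define SC where "SC = (\<Sum>n. m_term X i 0 (1 - c) n) * (\<Sum>n. m_term X j 0 (1 - c) n)"
  obtain M where majorant: "summable M"
    and dominated: "\<And>k x n. \<bar>x\<bar> < c \<Longrightarrow> n \<le> 2 \<Longrightarrow> w k * \<bar>p k\<bar> ^ n * exp (x * p k) \<le> M k"
    using z_exp_series_dominated[OF assms(1,3,4)] unfolding w_def p_def by blast
  have w_nonneg: "0 \<le> w k" for k
    by (simp add: w_def z_weight_nonneg)
  have summable: "summable (\<lambda>k. w k * p k ^ n * exp (x * p k))" if "\<bar>x\<bar> < c" "n \<le> 2" for x n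
    by (rule summable_exp_series[OF w_nonneg majorant dominated that])
  have SC_le: "SC \<le> (\<Sum>k. w k * exp (x * p k))" if "\<bar>x\<bar> < c" for x
    unfolding SC_def w_def p_def using that assms(1,4) summable[OF that, of 0]
    by (intro suminf_z_exp_series_ge) (auto simp: w_def p_def)
  have SC_pos: "0 < SC"
    using assms(5) by (simp add: SC_def)
  have "\<bar>deriv (deriv (z X i j)) y\<bar>
          \<le> (\<Sum>k. w k * (p k)\<^sup>2 * exp (y * p k)) / (\<Sum>k. w k * exp (y * p k))\<^sup>2"
  proof (rule abs_deriv2_inverse_exp_series_le[OF w_nonneg majorant dominated _ _ assms(2)])
    show "0 < (\<Sum>k. w k * exp (x * p k))" if "\<bar>x\<bar> < c" for x
      using SC_le[OF that] SC_pos by linarith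
    show "z X i j x = inverse (\<Sum>k. w k * exp (x * p k))" if "\<bar>x\<bar> < c" for x
      using summable[OF that, of 0] unfolding w_def p_def by (intro z_eq_inverse_exp_series) simp
  qed
  also have "\<dots> \<le> SA / SC\<^sup>2"
  proof (rule frac_le)
    show "(\<Sum>k. w k * (p k)\<^sup>2 * exp (y * p k)) \<le> SA"
      unfolding SA_def w_def p_def using assms(1-3) summable[OF assms(2), of 2]
      by (intro suminf_z_exp_series_moment2_le) (auto simp: w_def p_def)
    show "0 \<le> SA"
      using assms(3) by (simp add: SA_def m_term_nonneg suminf_nonneg)
    show "SC\<^sup>2 \<le> (\<Sum>k. w k * exp (y * p k))\<^sup>2"
      using SC_le[OF assms(2)] SC_pos by (intro power_mono) auto
  qed (use SC_pos in simp)
  finally show ?thesis by (simp add: SA_def SC_def)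
qed

lemma suminf_m_term_eq: "(\<Sum>n. m_term X l k u n) = sqrt (2 * pi) * m X l k u"
  by (simp add: m_def)

lemma abs_deriv2_z_le:
  fixes X :: "nat \<Rightarrow> nat pmf" and c y :: real
  assumes "c < 1" "\<bar>y\<bar> < c"
    and "\<And>l. l \<in> {i, j} \<Longrightarrow> summable (m_term X l 2 (1 / (1 - c)))"
    and "\<And>l. l \<in> {i, j} \<Longrightarrow> summable (m_term X l 0 (1 - c))"
    and "\<And>l. l \<in> {i, j} \<Longrightarrow> 0 < m X l 0 (1 - c)"
  shows "\<bar>deriv (deriv (z X i j)) y\<bar>
           \<le> m X i 2 (1 / (1 - c)) / (m X i 0 (1 - c))\<^sup>2
             * (m X j 2 (1 / (1 - c)) / (m X j 0 (1 - c))\<^sup>2) / (2 * pi)"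
proof -
  have "\<bar>deriv (deriv (z X i j)) y\<bar>
          \<le> (sqrt (2 * pi) * m X i 2 (1 / (1 - c))) * (sqrt (2 * pi) * m X j 2 (1 / (1 - c)))
            / ((sqrt (2 * pi) * m X i 0 (1 - c)) * (sqrt (2 * pi) * m X j 0 (1 - c)))\<^sup>2"
    using abs_deriv2_z_le_suminf[OF assms(1-4)] assms(5)
    by (simp add: suminf_m_term_eq del: real_sqrt_mult)
  also have "\<dots> = m X i 2 (1 / (1 - c)) / (m X i 0 (1 - c))\<^sup>2
             * (m X j 2 (1 / (1 - c)) / (m X j 0 (1 - c))\<^sup>2) / (2 * pi)"
    by (simp add: power2_eq_square field_simps del: real_sqrt_mult)
  finally show ?thesis .
qed

theorem mainTheorem11:
  fixes X :: "nat \<Rightarrow> nat pmf" and d i j :: nat and c y :: real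
  assumes "0 < c" and "c < 1" and "\<bar>y\<bar> < c"
    and "i \<in> {1..d}" and "j \<in> {1..d}"
    and "\<forall>l\<in>{1..d}. summable (m_term X l 2 (1 / (1 - c)))"
    and "\<forall>l\<in>{1..d}. summable (m_term X l 0 (1 - c))"
    and "\<forall>l\<in>{1..d}. m X l 0 (1 - c) > 0"
  shows "\<bar>deriv (deriv (z X i j)) y\<bar>
           \<le> 3 * (MAX l\<in>{1..d}. (m X l 2 (1 / (1 - c)))\<^sup>2 / (m X l 0 (1 - c)) ^ 4)"
proof -
  define r where "r l = m X l 2 (1 / (1 - c)) / (m X l 0 (1 - c))\<^sup>2" for l
  define R where "R = (MAX l\<in>{1..d}. (m X l 2 (1 / (1 - c)))\<^sup>2 / (m X l 0 (1 - c)) ^ 4)"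
  have r_nonneg: "0 \<le> r l" if "l \<in> {1..d}" for l
    using assms(6) that by (auto simp: r_def m_def m_term_nonneg suminf_nonneg)
  have r_square_le: "(r l)\<^sup>2 \<le> R" if "l \<in> {1..d}" for l
    using that by (auto simp: r_def R_def power_divide power_mult[symmetric] intro!: Max_ge)
  have "\<bar>deriv (deriv (z X i j)) y\<bar> \<le> r i * r j / (2 * pi)"
    unfolding r_def by (rule abs_deriv2_z_le) (use assms in auto)
  also have "\<dots> \<le> r i * r j"
    using mult_nonneg_nonneg[OF r_nonneg[OF assms(4)] r_nonneg[OF assms(5)]] pi_gt3
    by (simp add: divide_le_eq mult_le_cancel_left1)
  also have "\<dots> \<le> ((r i)\<^sup>2 + (r j)\<^sup>2) / 2"
    using sum_squares_bound[of "r i" "r j"] by simp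
  also have "\<dots> \<le> R"
    using r_square_le[OF assms(4)] r_square_le[OF assms(5)] by (simp add: field_simps)
  also have "R \<le> 3 * R"
    using order_trans[OF zero_le_power2 r_square_le[OF assms(4)]] by linarith
  finally show ?thesis unfolding R_def .
qed

end
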